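(* Consider the system $x_{k+1}=Ax_k+Bu_k$ with $(A,B)$ stabilizable, constraint sets $\mathcal{X}=\{x\mid C_xx\le c_x\}$, $\mathcal{U}=\{u\mid C_uu\le c_u\}$ (with $0\in\operatorname{int}\mathcal{X}$, $0\in\operatorname{int}\mathcal{U}$), cost $J=\sum_{k=0}^\infty x_k^TQx_k+u_k^TRu_k$ with $Q$ positive semidefinite and $R$ positive definite, and LQR gain $K_{\text{lqr}}$ (the optimal unconstrained feedback $u_k=-K_{\text{lqr}}x_k$ for $J$). Let the system be controlled by a ReLU network $u_k=\mathcal{N}(x_k;\theta)$ with $L$ hidden layers, closed loop $f_{\text{cl}}(x)=Ax+B\mathcal{N}(x;\theta)$, let $\Gamma_{\text{eq}}=G(0)$ and $\mathcal{R}_{\text{eq}}=\{x\mid G(x)=\Gamma_{\text{eq}}\}$, and suppose $W_{L+1}(W_{\Gamma_{\text{eq}},L}x+b_{\Gamma_{\text{eq}},L})+b_{L+1}=-K_{\text{lqr}}x$ for all $x\in\mathbb{R}^{n_x}$. Let $\mathcal{R}_{\text{lqr}}$ be the set of initial states from which the LQR feedback $u_k=-K_{\text{lqr}}x_k$ yields $x_k\in\mathcal{X}$, $u_k\in\mathcal{U}$ for all $k\ge0$, and let $\mathcal{R}_{\text{as}}$ be an admissible control-invariant set for the closed loop with $\mathcal{R}_{\text{as}}\subseteq\mathcal{R}_{\text{eq}}\cap\mathcal{R}_{\text{lqr}}$. Let $\mathcal{X}_{\text{in}}=\{x\mid C_{\text{in}}x\le c_{\text{in}}\}$ be a polytope,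 $k\ge1$, $C_{\text{out}}\in\mathbb{R}^{n_{\text{out}}\times n_x}$, $c_{\text{out}}^{*(i)}=\max_{x_0\in\mathcal{X}_{\text{in}}}C_{\text{out}}^{(i)}f_{\text{cl}}^k(x_0)$ and $\mathcal{X}^*_{k,\text{out}}=\{x\mid C_{\text{out}}x\le c^*_{\text{out}}\}$. If $\mathcal{X}^*_{k,\text{out}}\subseteq\mathcal{R}_{\text{as}}$, then the neural network controller drives the system to the origin optimally with respect to $J$ (i.e. it applies the LQR input $-K_{\text{lqr}}x$) for all $x\in\mathcal{R}_{\text{as}}$, and drives the system asymptotically to the origin for all $x\in\mathcal{X}_{\text{in}}$.
   Context: A ReLU network is $\mathcal{N}(x;\theta)=W_{L+1}\xi_L+b_{L+1}$ with $\xi_0=x$, $\xi_l=\max(0,W_l\xi_{l-1}+b_l)$ elementwise for $l=1,\dots,L$, where $W_l\in\mathbb{R}^{n_l\times n_{l-1}}$ ($n_0=n_x$), $b_l\in\mathbb{R}^{n_l}$, $W_{L+1}\in\mathbb{R}^{n_u\times n_L}$, $b_{L+1}\in\mathbb{R}^{n_u}$. The activation pattern is $G(x)=(\gamma_1(x),\dots,\gamma_L(x))$, $\gamma_l(x)^{(i)}=1$ iff $W_l^{(i)}\xi_{l-1}+b_l^{(i)}\ge0$, else $0$. For a fixed pattern $\Gamma=(\gamma_1,\dots,\gamma_L)$ set $\eta_0=x$, $\eta_l=\gamma_l\odot(W_l\eta_{l-1}+b_l)$; then $\eta_L=W_{\Gamma,L}x+b_{\Gamma,L}$ defines $W_{\Gamma,L},b_{\Gamma,L}$,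 and $\mathcal{N}(x;\theta)=W_{L+1}(W_{\Gamma_{\text{eq}},L}x+b_{\Gamma_{\text{eq}},L})+b_{L+1}$ on $\mathcal{R}_{\text{eq}}$. $f_{\text{cl}}^k$ denotes the $k$-fold composition. A set $\mathcal{C}$ is an admissible control-invariant set for the closed loop if $\mathcal{N}(x;\theta)\in\mathcal{U}$ for all $x\in\mathcal{C}$ and $f_{\text{cl}}(\mathcal{C})\subseteq\mathcal{C}$. *)

theory Defs
  imports Complex_Main
begin

text \<open>Vectors in R^n are represented as functions nat => real that vanish at
indices >= n; matrices as nat => nat => real (only the block i < rows, j < cols
is used). This explicit-dimension encoding is needed because the hidden-layer
widths n_1, ..., n_L vary with the (arbitrary) number L of layers.\<close>

type_synonym vec = "nat \<Rightarrow> real"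
type_synonym mat = "nat \<Rightarrow> nat \<Rightarrow> real"

definition vecs :: "nat \<Rightarrow> vec set" where
  "vecs n = {x. \<forall>i\<ge>n. x i = 0}"

definition zvec :: vec where "zvec = (\<lambda>_. 0)"

definition mv :: "nat \<Rightarrow> nat \<Rightarrow> mat \<Rightarrow> vec \<Rightarrow> vec" where
  "mv m n M x = (\<lambda>i. if i < m then (\<Sum>j<n. M i j * x j) else 0)"

definition vadd :: "vec \<Rightarrow> vec \<Rightarrow> vec" where
  "vadd x y = (\<lambda>i. x i + y i)"

definition vneg :: "vec \<Rightarrow> vec" where
  "vneg x = (\<lambda>i. - x i)"

definition quad :: "nat \<Rightarrow> mat \<Rightarrow> vec \<Rightarrow> real" where
  "quad n M x = (\<Sum>i<n. \<Sum>j<n. x i * M i j * x j)"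

definition psd :: "nat \<Rightarrow> mat \<Rightarrow> bool" where
  "psd n M \<longleftrightarrow> (\<forall>i<n. \<forall>j<n. M i j = M j i) \<and> (\<forall>x\<in>vecs n. quad n M x \<ge> 0)"

definition pd :: "nat \<Rightarrow> mat \<Rightarrow> bool" where
  "pd n M \<longleftrightarrow> (\<forall>i<n. \<forall>j<n. M i j = M j i) \<and> (\<forall>x\<in>vecs n. x \<noteq> zvec \<longrightarrow> quad n M x > 0)"

definition polyhedron :: "nat \<Rightarrow> nat \<Rightarrow> mat \<Rightarrow> vec \<Rightarrow> vec set" where
  "polyhedron n p C c = {x \<in> vecs n. \<forall>i<p. (\<Sum>j<n. C i j * x j) \<le> c i}"

definition bounded_set :: "nat \<Rightarrow> vec set \<Rightarrow> bool" where
  "bounded_set n S \<longleftrightarrow> (\<exists>M. \<forall>x\<in>S. \<forall>i<n. \<bar>x i\<bar> \<le> M)"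

definition zero_interior :: "nat \<Rightarrow> vec set \<Rightarrow> bool" where
  "zero_interior n S \<longleftrightarrow> (\<exists>e>0. \<forall>x\<in>vecs n. (\<forall>i<n. \<bar>x i\<bar> < e) \<longrightarrow> x \<in> S)"

definition to_origin :: "nat \<Rightarrow> (nat \<Rightarrow> vec) \<Rightarrow> bool" where
  "to_origin n xs \<longleftrightarrow> (\<forall>i<n. (\<lambda>k. xs k i) \<longlonglongrightarrow> 0)"

definition step :: "nat \<Rightarrow> nat \<Rightarrow> mat \<Rightarrow> mat \<Rightarrow> vec \<Rightarrow> vec \<Rightarrow> vec" where
  "step nx nu A B x u = vadd (mv nx nx A x) (mv nx nu B u)"

fun traj :: "nat \<Rightarrow> nat \<Rightarrow> mat \<Rightarrow> mat \<Rightarrow> (nat \<Rightarrow> vec) \<Rightarrow> vec \<Rightarrow> nat \<Rightarrow> vec" where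
  "traj nx nu A B u x0 0 = x0"
| "traj nx nu A B u x0 (Suc k) = step nx nu A B (traj nx nu A B u x0 k) (u k)"

fun fb_traj :: "nat \<Rightarrow> nat \<Rightarrow> mat \<Rightarrow> mat \<Rightarrow> mat \<Rightarrow> vec \<Rightarrow> nat \<Rightarrow> vec" where
  "fb_traj nx nu A B K x0 0 = x0"
| "fb_traj nx nu A B K x0 (Suc k) =
     step nx nu A B (fb_traj nx nu A B K x0 k) (vneg (mv nu nx K (fb_traj nx nu A B K x0 k)))"

definition stabilizable :: "nat \<Rightarrow> nat \<Rightarrow> mat \<Rightarrow> mat \<Rightarrow> bool" where
  "stabilizable nx nu A B \<longleftrightarrow>
     (\<exists>K. \<forall>x0\<in>vecs nx. to_origin nx (fb_traj nx nu A B K x0))"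

definition stage_cost :: "nat \<Rightarrow> nat \<Rightarrow> mat \<Rightarrow> mat \<Rightarrow> vec \<Rightarrow> vec \<Rightarrow> real" where
  "stage_cost nx nu Q R x u = quad nx Q x + quad nu R u"

definition lqr_gain :: "nat \<Rightarrow> nat \<Rightarrow> mat \<Rightarrow> mat \<Rightarrow> mat \<Rightarrow> mat \<Rightarrow> mat \<Rightarrow> bool" where
  "lqr_gain nx nu A B Q R K \<longleftrightarrow>
     (\<forall>x0\<in>vecs nx.
        let xs = fb_traj nx nu A B K x0;
            cK = (\<lambda>k. stage_cost nx nu Q R (xs k) (vneg (mv nu nx K (xs k))))
        in summable cK \<and> to_origin nx xs \<and>
           (\<forall>u. (\<forall>k. u k \<in> vecs nu) \<longrightarrow>
                summable (\<lambda>k. stage_cost nx nu Q R (traj nx nu A B u x0 k) (u k)) \<longrightarrow>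
                suminf cK \<le> suminf (\<lambda>k. stage_cost nx nu Q R (traj nx nu A B u x0 k) (u k))))"

text \<open>ReLU networks. A hidden layer is a triple (n_l, W_l, b_l); the input
dimension of layer l is n_{l-1} (n_0 = n_x).\<close>

type_synonym layer = "nat \<times> mat \<times> vec"

definition preact :: "nat \<Rightarrow> nat \<Rightarrow> mat \<Rightarrow> vec \<Rightarrow> vec \<Rightarrow> vec" where
  "preact n m W b x = (\<lambda>i. if i < n then (\<Sum>j<m. W i j * x j) + b i else 0)"

definition relu_layer :: "nat \<Rightarrow> nat \<Rightarrow> mat \<Rightarrow> vec \<Rightarrow> vec \<Rightarrow> vec" where
  "relu_layer n m W b x = (\<lambda>i. max 0 (preact n m W b x i))"

fun fwd :: "nat \<Rightarrow> layer list \<Rightarrow> vec \<Rightarrow> vec" where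
  "fwd m [] x = x"
| "fwd m ((n, W, b) # ls) x = fwd n ls (relu_layer n m W b x)"

fun outdim :: "nat \<Rightarrow> layer list \<Rightarrow> nat" where
  "outdim m [] = m"
| "outdim m ((n, W, b) # ls) = outdim n ls"

text \<open>Activation pattern G(x) = (gamma_1(x),...,gamma_L(x)); gamma_l(x)^(i) is
True (=1) iff the preactivation is >= 0 (entries i >= n_l are set to False).\<close>
fun pattern :: "nat \<Rightarrow> layer list \<Rightarrow> vec \<Rightarrow> (nat \<Rightarrow> bool) list" where
  "pattern m [] x = []"
| "pattern m ((n, W, b) # ls) x =
     (\<lambda>i. i < n \<and> preact n m W b x i \<ge> 0) # pattern n ls (relu_layer n m W b x)"

text \<open>eta_L for a fixed pattern Gamma: eta_l = gamma_l .* (W_l eta_{l-1} + b_l).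
By definition this is W_{Gamma,L} x + b_{Gamma,L}.\<close>
fun eta :: "nat \<Rightarrow> layer list \<Rightarrow> (nat \<Rightarrow> bool) list \<Rightarrow> vec \<Rightarrow> vec" where
  "eta m [] gs x = x"
| "eta m ((n, W, b) # ls) [] x = x"
| "eta m ((n, W, b) # ls) (g # gs) x =
     eta n ls gs (\<lambda>i. if g i then preact n m W b x i else 0)"

definition net :: "nat \<Rightarrow> layer list \<Rightarrow> nat \<Rightarrow> mat \<Rightarrow> vec \<Rightarrow> vec \<Rightarrow> vec" where
  "net nx ls nu Wo bo x = preact nu (outdim nx ls) Wo bo (fwd nx ls x)"

definition net_fixed :: "nat \<Rightarrow> layer list \<Rightarrow> nat \<Rightarrow> mat \<Rightarrow> vec \<Rightarrow> (nat \<Rightarrow> bool) list \<Rightarrow> vec \<Rightarrow> vec" where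
  "net_fixed nx ls nu Wo bo \<Gamma> x = preact nu (outdim nx ls) Wo bo (eta nx ls \<Gamma> x)"

definition admissible_invariant :: "(vec \<Rightarrow> vec) \<Rightarrow> (vec \<Rightarrow> vec) \<Rightarrow> vec set \<Rightarrow> vec set \<Rightarrow> bool" where
  "admissible_invariant N fcl U C \<longleftrightarrow> (\<forall>x\<in>C. N x \<in> U) \<and> fcl ` C \<subseteq> C"

end

theory Submission
  imports Defs
begin

text \<open>On the equilibrium region the network has the activation pattern of the origin, so
it equals the affine map of that fixed pattern, i.e. the LQR feedback. On an invariant
subset of that region the closed loop is therefore the LQR closed loop, which converges
to the origin. After k steps every state of the input polytope lies in the output
polytope, hence in the invariant set.\<close>

lemma eta_own_pattern: "eta m ls (pattern m ls x) x = fwd m ls x"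
proof (induction ls arbitrary: m x)
  case Nil
  then show ?case by simp
next
  case (Cons l ls)
  obtain n W b where l: "l = (n, W, b)" by (cases l) auto
  have "(\<lambda>i. if i < n \<and> preact n m W b x i \<ge> 0 then preact n m W b x i else 0)
          = relu_layer n m W b x"
    by (rule ext) (auto simp: relu_layer_def preact_def)
  with Cons show ?case by (simp add: l)
qed

lemma net_eq_net_fixed_pattern:
  "net nx ls nu Wo bo x = net_fixed nx ls nu Wo bo (pattern nx ls x) x"
  by (simp add: net_def net_fixed_def eta_own_pattern)

lemma step_in_vecs: "step nx nu A B x u \<in> vecs nx"
  by (simp add: step_def vecs_def vadd_def mv_def)

lemma closed_loop_funpow_in_vecs:
  assumes "f = (\<lambda>x. step nx nu A B x (N x))" and "k \<ge> 1"
  shows "(f ^^ k) x \<in> vecs nx"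
proof -
  obtain k' where "k = Suc k'" using \<open>k \<ge> 1\<close> by (cases k) auto
  then show ?thesis by (simp add: assms(1) step_in_vecs)
qed

lemma funpow_in_invariant:
  assumes "f ` C \<subseteq> C" and "x \<in> C"
  shows "(f ^^ j) x \<in> C"
  by (induction j) (use assms in auto)

lemma lqr_gain_to_origin:
  assumes "lqr_gain nx nu A B Q R K" and "x0 \<in> vecs nx"
  shows "to_origin nx (fb_traj nx nu A B K x0)"
  using assms by (auto simp: lqr_gain_def Let_def)

lemma to_origin_funpow_shift:
  assumes "to_origin n (\<lambda>j. (f ^^ j) ((f ^^ k) x))"
  shows "to_origin n (\<lambda>j. (f ^^ j) x)"
  unfolding to_origin_def
proof (intro allI impI)
  fix i assume "i < n"
  with assms have "(\<lambda>j. (f ^^ (j + k)) x i) \<longlonglongrightarrow> 0"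
    by (simp add: to_origin_def funpow_add)
  then show "(\<lambda>j. (f ^^ j) x i) \<longlonglongrightarrow> 0"
    by (rule LIMSEQ_offset)
qed

lemma funpow_closed_loop_eq_fb_traj:
  assumes f: "f = (\<lambda>x. step nx nu A B x (N x))"
    and inv: "f ` C \<subseteq> C"
    and lqr: "\<forall>y\<in>C. N y = vneg (mv nu nx K y)"
    and x: "x \<in> C"
  shows "(f ^^ j) x = fb_traj nx nu A B K x j"
proof (induction j)
  case 0
  then show ?case by simp
next
  case (Suc j)
  have "N ((f ^^ j) x) = vneg (mv nu nx K ((f ^^ j) x))"
    using lqr funpow_in_invariant[OF inv x] by blast
  with Suc show ?case by (simp add: f)
qed

lemma closed_loop_follows_lqr:
  assumes f: "f = (\<lambda>x. step nx nu A B x (N x))"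
    and inv: "f ` C \<subseteq> C"
    and lqr: "\<forall>y\<in>C. N y = vneg (mv nu nx K y)"
    and K: "lqr_gain nx nu A B Q R K"
    and C: "C \<subseteq> vecs nx"
    and x: "x \<in> C"
  shows "(\<forall>j. N ((f ^^ j) x) = vneg (mv nu nx K ((f ^^ j) x))) \<and> to_origin nx (\<lambda>j. (f ^^ j) x)"
proof
  show "\<forall>j. N ((f ^^ j) x) = vneg (mv nu nx K ((f ^^ j) x))"
    using lqr funpow_in_invariant[OF inv x] by blast
  have "to_origin nx (fb_traj nx nu A B K x)"
    using lqr_gain_to_origin[OF K] C x by blast
  then show "to_origin nx (\<lambda>j. (f ^^ j) x)"
    using funpow_closed_loop_eq_fb_traj[OF f inv lqr x] by simp
qed

theorem corollary1:
  fixes nx nu px pu pin nout k :: nat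
    and A B Q R K Cx Cu Cin Cout Wo :: mat
    and cx cu cin cstar bo :: vec
    and ls :: "layer list"
    and Ras :: "vec set"
  defines "X \<equiv> polyhedron nx px Cx cx"
      and "U \<equiv> polyhedron nu pu Cu cu"
      and "N \<equiv> net nx ls nu Wo bo"
      and "fcl \<equiv> (\<lambda>x. step nx nu A B x (net nx ls nu Wo bo x))"
      and "Geq \<equiv> pattern nx ls zvec"
      and "Req \<equiv> {x \<in> vecs nx. pattern nx ls x = pattern nx ls zvec}"
      and "Rlqr \<equiv> {x0 \<in> vecs nx. \<forall>j. fb_traj nx nu A B K x0 j \<in> polyhedron nx px Cx cx \<and>
                                     vneg (mv nu nx K (fb_traj nx nu A B K x0 j)) \<in> polyhedron nu pu Cu cu}"
      and "Xin \<equiv> polyhedron nx pin Cin cin"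
      and "Xout \<equiv> polyhedron nx nout Cout cstar"
  assumes stab: "stabilizable nx nu A B"
    and X_int: "zero_interior nx X"
    and U_int: "zero_interior nu U"
    and Q_psd: "psd nx Q"
    and R_pd: "pd nu R"
    and K_lqr: "lqr_gain nx nu A B Q R K"
    and eq_lqr: "\<forall>x\<in>vecs nx. net_fixed nx ls nu Wo bo Geq x = vneg (mv nu nx K x)"
    and Ras_inv: "admissible_invariant N fcl U Ras"
    and Ras_sub: "Ras \<subseteq> Req \<inter> Rlqr"
    and Xin_polytope: "bounded_set nx Xin"
    and k_ge: "k \<ge> 1"
    and cstar_max: "\<forall>i<nout.
          (\<exists>x0\<in>Xin. (\<Sum>j<nx. Cout i j * (fcl ^^ k) x0 j) = cstar i) \<and>
          (\<forall>x0\<in>Xin. (\<Sum>j<nx. Cout i j * (fcl ^^ k) x0 j) \<le> cstar i)"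
    and Xout_sub: "Xout \<subseteq> Ras"
  shows "(\<forall>x\<in>Ras. (\<forall>j. N ((fcl ^^ j) x) = vneg (mv nu nx K ((fcl ^^ j) x)))
                 \<and> to_origin nx (\<lambda>j. (fcl ^^ j) x))
       \<and> (\<forall>x\<in>Xin. to_origin nx (\<lambda>j. (fcl ^^ j) x))"
proof -
  have fcl: "fcl = (\<lambda>x. step nx nu A B x (N x))" by (simp add: fcl_def N_def)
  have inv: "fcl ` Ras \<subseteq> Ras" using Ras_inv by (simp add: admissible_invariant_def)
  have Ras_vecs: "Ras \<subseteq> vecs nx" using Ras_sub by (auto simp: Req_def)
  have N_lqr: "\<forall>y\<in>Ras. N y = vneg (mv nu nx K y)"
    using Ras_sub eq_lqr by (auto simp: N_def Req_def Geq_def net_eq_net_fixed_pattern)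
  have on_Ras: "\<forall>x\<in>Ras. (\<forall>j. N ((fcl ^^ j) x) = vneg (mv nu nx K ((fcl ^^ j) x)))
                   \<and> to_origin nx (\<lambda>j. (fcl ^^ j) x)"
    using closed_loop_follows_lqr[OF fcl inv N_lqr K_lqr Ras_vecs] by blast
  have "to_origin nx (\<lambda>j. (fcl ^^ j) x)" if x: "x \<in> Xin" for x
  proof -
    have "(fcl ^^ k) x \<in> Xout"
      using closed_loop_funpow_in_vecs[OF fcl k_ge] cstar_max x by (simp add: Xout_def polyhedron_def)
    then show ?thesis
      using on_Ras Xout_sub to_origin_funpow_shift by blast
  qed
  with on_Ras show ?thesis by blast
qed

end
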